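(* For every $\beta\in\Psi^+$ and $i\in\{0,1\}$ there exist $a_1,a_2\in W({\rm G}_2)$, $j\in\{0,1\}$ and $t\in\mathbb{Z}$ such that $e_\beta e_i=\delta^ta_1e_ja_2$ in ${\rm Br}({\rm G}_2)$.
   Context: Let $\delta$ be an indeterminate. ${\rm Br}({\rm G}_2)$ is the $\mathbb{Z}[\delta^{\pm1}]$-algebra generated by $r_0,r_1,e_0,e_1$ subject to the following relations: - $r_0^2=r_1^2=1$; - $r_ie_i=e_ir_i=e_i$ for $i=0,1$; - $e_0^2=\delta^3e_0$ and $e_1^2=\delta e_1$; - $r_0e_1e_0=r_1e_0$ and $e_0e_1r_0=e_0r_1$; - $e_1r_0e_1r_0e_1=e_1$ and $e_1r_0e_1r_0r_1=e_1r_0r_1r_0$; - $e_0r_1e_0=\delta^2e_0$; - $r_1r_0e_1r_0e_1=r_0r_1r_0e_1$; - $(r_1r_0)^6=1$. Let $\Psi$ be a root system of type ${\rm G}_2$ with simple roots $\beta_0$ (short) and $\beta_1$ (long), and positive roots $\Psi^+=\{\beta_0,\beta_1,\beta_0+\beta_1,2\beta_0+\beta_1,3\beta_0+\beta_1,3\beta_0+2\beta_1\}$. $W({\rm G}_2)$ is generated by the reflections $s_0,s_1$ in $\beta_0,\beta_1$. The subgroup of units of ${\rm Br}({\rm G}_2)$ generated by $r_0,r_1$ is isomorphic to $W({\rm G}_2)$ via $r_i\mapsto s_i$, and elements of $W({\rm G}_2)$ are identified with their images. For $\beta\in\Psi^+$, choose $w\in W({\rm G}_2)$ and $k\in\{0,1\}$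 with $w\beta_k=\beta$, and set $e_\beta=we_kw^{-1}$. This is independent of the choice of $w$ and $k$. *)

theory Defs
  imports Main
begin

text \<open>Br(G2) is presented by generators and relations over Z[delta^{+-1}].
  An identity holds in the presented algebra iff it holds in every
  Z[delta^{+-1}]-algebra, i.e. every ring with identity 'a together with a
  central invertible element d (image of delta, with inverse di) and elements
  r0 r1 e0 e1 satisfying the defining relations.\<close>

definition zpow :: "'a::ring_1 \<Rightarrow> 'a \<Rightarrow> int \<Rightarrow> 'a" where
  "zpow d di t = (if 0 \<le> t then d ^ nat t else di ^ nat (- t))"

definition brg2_rel :: "'a::ring_1 \<Rightarrow> 'a \<Rightarrow> 'a \<Rightarrow> 'a \<Rightarrow> 'a \<Rightarrow> 'a \<Rightarrow> bool" where
  "brg2_rel d di r0 r1 e0 e1 \<longleftrightarrow>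
     d * di = 1 \<and> di * d = 1 \<and> (\<forall>x. d * x = x * d) \<and>
     r0 * r0 = 1 \<and> r1 * r1 = 1 \<and>
     r0 * e0 = e0 \<and> e0 * r0 = e0 \<and> r1 * e1 = e1 \<and> e1 * r1 = e1 \<and>
     e0 * e0 = d ^ 3 * e0 \<and> e1 * e1 = d * e1 \<and>
     r0 * e1 * e0 = r1 * e0 \<and> e0 * e1 * r0 = e0 * r1 \<and>
     e1 * r0 * e1 * r0 * e1 = e1 \<and> e1 * r0 * e1 * r0 * r1 = e1 * r0 * r1 * r0 \<and>
     e0 * r1 * e0 = d ^ 2 * e0 \<and>
     r1 * r0 * e1 * r0 * e1 = r0 * r1 * r0 * e1 \<and>
     (r1 * r0) ^ 6 = 1"

text \<open>Elements of W(G2) are given as words in the generators 0,1 (list entries);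
  a word [i1,...,in] stands for r_{i1} ... r_{in} (resp. s_{i1} ... s_{in}).\<close>

definition gen_r :: "'a::ring_1 \<Rightarrow> 'a \<Rightarrow> nat \<Rightarrow> 'a" where
  "gen_r r0 r1 i = (if i = 0 then r0 else r1)"

definition gen_e :: "'a::ring_1 \<Rightarrow> 'a \<Rightarrow> nat \<Rightarrow> 'a" where
  "gen_e e0 e1 i = (if i = 0 then e0 else e1)"

definition wprod :: "'a::ring_1 \<Rightarrow> 'a \<Rightarrow> nat list \<Rightarrow> 'a" where
  "wprod r0 r1 w = foldr (\<lambda>i acc. gen_r r0 r1 i * acc) w 1"

definition is_word :: "nat list \<Rightarrow> bool" where
  "is_word w \<longleftrightarrow> set w \<subseteq> {0, 1}"

text \<open>Roots of G2 as integer coefficient pairs (c0, c1) meaning c0*beta0 + c1*beta1,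
  beta0 short, beta1 long. Reflections: s0 x = x - <x,beta0^v> beta0,
  s1 x = x - <x,beta1^v> beta1, with <beta1,beta0^v> = -3, <beta0,beta1^v> = -1.\<close>

definition refl :: "nat \<Rightarrow> int \<times> int \<Rightarrow> int \<times> int" where
  "refl i v = (case v of (c0, c1) \<Rightarrow>
      if i = 0 then (3 * c1 - c0, c1) else (c0, c0 - c1))"

definition wact :: "nat list \<Rightarrow> int \<times> int \<Rightarrow> int \<times> int" where
  "wact w v = foldr refl w v"

definition simple_root :: "nat \<Rightarrow> int \<times> int" where
  "simple_root k = (if k = 0 then (1, 0) else (0, 1))"

definition pos_roots :: "(int \<times> int) set" where
  "pos_roots = {(1,0), (0,1), (1,1), (2,1), (3,1), (3,2)}"

text \<open>e_beta = w e_k w^{-1} for some chosen w, k with w beta_k = beta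
  (the inverse of the word w is its reverse, generators being involutions).\<close>

definition ebeta :: "'a::ring_1 \<Rightarrow> 'a \<Rightarrow> 'a \<Rightarrow> 'a \<Rightarrow> int \<times> int \<Rightarrow> 'a" where
  "ebeta r0 r1 e0 e1 \<beta> =
     (let (w, k) = (SOME (w, k). is_word w \<and> k < 2 \<and> wact w (simple_root k) = \<beta>)
      in wprod r0 r1 w * gen_e e0 e1 k * wprod r0 r1 (rev w))"

end

theory Submission
  imports Defs
begin

text \<open>A conjugate \<open>w e\<^sub>k w\<^sup>-\<^sup>1\<close> depends only on the root \<open>\<plusminus>w \<beta>\<^sub>k\<close>. We fix a representative
  \<open>e_root \<beta>\<close> for every pair \<open>\<plusminus>\<beta>\<close> of roots of \<open>G\<^sub>2\<close> and check that conjugation by \<open>r\<^sub>i\<close> permutes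
  the representatives as \<open>s\<^sub>i\<close> permutes the roots. Besides \<open>r\<^sub>i e\<^sub>i = e\<^sub>i r\<^sub>i = e\<^sub>i\<close> this only needs
  that \<open>r\<^sub>1\<close> fixes \<open>e_root (2\<beta>\<^sub>0+\<beta>\<^sub>1)\<close> and \<open>r\<^sub>0\<close> fixes \<open>e_root (3\<beta>\<^sub>0+2\<beta>\<^sub>1)\<close>, which follow from the
  defining relations in a few steps. Hence \<open>e\<^sub>\<beta> = e_root \<beta>\<close> whichever \<open>w\<close> and \<open>k\<close> are chosen in the
  definition of \<open>e\<^sub>\<beta>\<close>, and the theorem reduces to the twelve products \<open>e_root \<beta> e\<^sub>i\<close>, each a
  short computation in \<open>Br(G\<^sub>2)\<close>.\<close>

definition G2_roots :: "(int \<times> int) set" where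
  "G2_roots = pos_roots \<union> {(-1,0), (0,-1), (-1,-1), (-2,-1), (-3,-1), (-3,-2)}"

lemma refl_eq_refl_0_or_1: "refl i = refl (if i = 0 then 0 else 1)"
  by (simp add: refl_def fun_eq_iff)

lemma refl_G2_roots:
  assumes "\<beta> \<in> G2_roots"
  shows "refl i \<beta> \<in> G2_roots"
proof -
  have "\<forall>\<beta>\<in>G2_roots. refl 0 \<beta> \<in> G2_roots \<and> refl 1 \<beta> \<in> G2_roots"
    by (simp add: G2_roots_def pos_roots_def refl_def)
  then show ?thesis
    using assms by (subst refl_eq_refl_0_or_1) simp
qed

lemma wact_simple_root_in_G2_roots: "wact w (simple_root k) \<in> G2_roots"
proof (induction w)
  case Nil
  show ?case by (simp add: wact_def simple_root_def G2_roots_def pos_roots_def)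
next
  case (Cons i w)
  then show ?case by (simp add: wact_def refl_G2_roots)
qed

lemma pos_roots_conjugate_simple_root:
  assumes "\<beta> \<in> pos_roots"
  shows "\<exists>w k. is_word w \<and> k < 2 \<and> wact w (simple_root k) = \<beta>"
proof -
  have "wact [] (simple_root 0) = (1,0)" "wact [] (simple_root 1) = (0,1)"
    "wact [1] (simple_root 0) = (1,1)" "wact [0,1] (simple_root 0) = (2,1)"
    "wact [0] (simple_root 1) = (3,1)" "wact [1,0] (simple_root 1) = (3,2)"
    by (simp_all add: wact_def refl_def simple_root_def)
  moreover have "is_word []" "is_word [0]" "is_word [1]" "is_word [0,1]" "is_word [1,0]"
    by (simp_all add: is_word_def)
  moreover have "(0::nat) < 2" "(1::nat) < 2"
    by simp_all
  ultimately show ?thesis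
    using assms unfolding pos_roots_def by blast
qed

text \<open>The last branch covers \<open>\<plusminus>(3\<beta>\<^sub>0+2\<beta>\<^sub>1)\<close>, and also every non-root.\<close>

definition e_root :: "'a::ring_1 \<Rightarrow> 'a \<Rightarrow> 'a \<Rightarrow> 'a \<Rightarrow> int \<times> int \<Rightarrow> 'a" where
  "e_root r0 r1 e0 e1 \<beta> =
     (if \<beta> \<in> {(1,0), (-1,0)} then e0
      else if \<beta> \<in> {(1,1), (-1,-1)} then r1 * e0 * r1
      else if \<beta> \<in> {(2,1), (-2,-1)} then r0 * r1 * e0 * r1 * r0
      else if \<beta> \<in> {(0,1), (0,-1)} then e1
      else if \<beta> \<in> {(3,1), (-3,-1)} then r0 * e1 * r0
      else r1 * r0 * e1 * r0 * r1)"

lemma wprod_Nil: "wprod r0 r1 [] = 1"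
  by (simp add: wprod_def)

lemma wprod_Cons: "wprod r0 r1 (i # w) = gen_r r0 r1 i * wprod r0 r1 w"
  by (simp add: wprod_def)

lemma wprod_append: "wprod r0 r1 (u @ w) = wprod r0 r1 u * wprod r0 r1 w"
  by (induction u) (simp_all add: wprod_def mult.assoc)

locale brauer_G2 =
  fixes d di r0 r1 e0 e1 :: "'a::ring_1"
  assumes relations: "brg2_rel d di r0 r1 e0 e1"
begin

lemma d_central: "d * x = x * d"
  and r0_square: "r0 * r0 = 1" and r1_square: "r1 * r1 = 1"
  and r0_e0: "r0 * e0 = e0" and e0_r0: "e0 * r0 = e0"
  and r1_e1: "r1 * e1 = e1" and e1_r1: "e1 * r1 = e1"
  and e0_square: "e0 * e0 = d ^ 3 * e0" and e1_square: "e1 * e1 = d * e1"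
  and r0_e1_e0: "r0 * e1 * e0 = r1 * e0" and e0_e1_r0: "e0 * e1 * r0 = e0 * r1"
  and e1_r0_e1_r0_e1: "e1 * r0 * e1 * r0 * e1 = e1"
  and e1_r0_e1_r0_r1: "e1 * r0 * e1 * r0 * r1 = e1 * r0 * r1 * r0"
  and e0_r1_e0: "e0 * r1 * e0 = d ^ 2 * e0"
  and r1_r0_e1_r0_e1: "r1 * r0 * e1 * r0 * e1 = r0 * r1 * r0 * e1"
  using relations unfolding brg2_rel_def by auto

lemma d_power_central: "d ^ n * x = x * d ^ n"
  by (rule power_commuting_commutes) (rule d_central)

lemma r0_square_left: "r0 * (r0 * x) = x"
  by (simp add: mult.assoc[symmetric] r0_square)

lemma r1_square_left: "r1 * (r1 * x) = x"
  by (simp add: mult.assoc[symmetric] r1_square)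

lemma e1_e0: "e1 * e0 = r0 * r1 * e0"
  by (metis r0_e1_e0 r0_square mult.assoc mult_1_left)

lemma e0_e1: "e0 * e1 = e0 * r1 * r0"
  by (metis e0_e1_r0 r0_square mult.assoc mult_1_right)

lemma e1_r0_e1: "e1 * r0 * e1 = e1 * r0 * r1 * r0 * r1 * r0"
  by (metis e1_r0_e1_r0_r1 r0_square r1_square mult.assoc mult_1_right)

lemma r1_fixes_e_root_2_1: "r1 * r0 * r1 * e0 * r1 * r0 * r1 = r0 * r1 * e0 * r1 * r0"
proof -
  have "r0 * r1 * e0 * r1 * r0 = e1 * e0 * e1"
    by (simp add: e1_e0 e0_e1 mult.assoc)
  then show ?thesis
    by (metis r1_e1 e1_r1 mult.assoc)
qed

lemma r0_fixes_e_root_3_2: "r0 * r1 * r0 * e1 * r0 * r1 * r0 = r1 * r0 * e1 * r0 * r1"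
proof -
  have "r0 * r1 * r0 * e1 * r0 * r1 * r0 = r1 * r0 * e1 * r0 * (e1 * r0 * r1 * r0)"
    by (metis r1_r0_e1_r0_e1 mult.assoc)
  also have "\<dots> = r1 * r0 * (e1 * r0 * e1 * r0 * e1) * r0 * r1"
    by (metis e1_r0_e1_r0_r1 mult.assoc)
  also have "\<dots> = r1 * r0 * e1 * r0 * r1"
    by (simp add: e1_r0_e1_r0_e1)
  finally show ?thesis .
qed

lemma gen_r_conj_e_root:
  assumes "\<beta> \<in> G2_roots"
  shows "gen_r r0 r1 i * e_root r0 r1 e0 e1 \<beta> * gen_r r0 r1 i = e_root r0 r1 e0 e1 (refl i \<beta>)"
proof -
  have "\<forall>\<beta>\<in>G2_roots. r0 * e_root r0 r1 e0 e1 \<beta> * r0 = e_root r0 r1 e0 e1 (refl 0 \<beta>) \<and>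
      r1 * e_root r0 r1 e0 e1 \<beta> * r1 = e_root r0 r1 e0 e1 (refl 1 \<beta>)"
    by (simp add: G2_roots_def pos_roots_def refl_def e_root_def mult.assoc
        r0_square r1_square r0_square_left r1_square_left r0_e0 e0_r0 r1_e1 e1_r1
        r1_fixes_e_root_2_1[unfolded mult.assoc] r0_fixes_e_root_3_2[unfolded mult.assoc])
  then show ?thesis
    using assms by (subst refl_eq_refl_0_or_1) (simp add: gen_r_def)
qed

lemma wprod_conj_gen_e:
  "wprod r0 r1 w * gen_e e0 e1 k * wprod r0 r1 (rev w) = e_root r0 r1 e0 e1 (wact w (simple_root k))"
proof (induction w)
  case Nil
  show ?case by (simp add: wprod_def wact_def gen_e_def simple_root_def e_root_def)
next
  case (Cons i w)
  have "wprod r0 r1 (i # w) * gen_e e0 e1 k * wprod r0 r1 (rev (i # w))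
      = gen_r r0 r1 i * (wprod r0 r1 w * gen_e e0 e1 k * wprod r0 r1 (rev w)) * gen_r r0 r1 i"
    by (simp add: wprod_Nil wprod_Cons wprod_append mult.assoc)
  also have "\<dots> = e_root r0 r1 e0 e1 (refl i (wact w (simple_root k)))"
    by (simp add: Cons.IH gen_r_conj_e_root wact_simple_root_in_G2_roots)
  finally show ?case by (simp add: wact_def)
qed

lemma ebeta_eq_e_root:
  assumes "\<beta> \<in> pos_roots"
  shows "ebeta r0 r1 e0 e1 \<beta> = e_root r0 r1 e0 e1 \<beta>"
proof -
  define P where "P = (\<lambda>(w, k). is_word w \<and> k < 2 \<and> wact w (simple_root k) = \<beta>)"
  obtain w k where wk: "(SOME x. P x) = (w, k)"
    by (cases "SOME x. P x")
  obtain w0 k0 where "P (w0, k0)"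
    using pos_roots_conjugate_simple_root[OF assms] unfolding P_def by auto
  then have "P (w, k)"
    unfolding wk[symmetric] by (rule someI)
  then have "wact w (simple_root k) = \<beta>"
    by (simp add: P_def)
  moreover have "ebeta r0 r1 e0 e1 \<beta> = wprod r0 r1 w * gen_e e0 e1 k * wprod r0 r1 (rev w)"
    unfolding ebeta_def P_def[symmetric] wk by simp
  ultimately show ?thesis
    using wprod_conj_gen_e[of w k] by simp
qed

lemma r1_e0_r1_e0: "r1 * e0 * r1 * e0 = d ^ 2 * r1 * e0"
  by (metis e0_r1_e0 d_power_central mult.assoc)

lemma r1_e0_r1_e1: "r1 * e0 * r1 * e1 = r1 * e0 * r1 * r0"
  by (metis r1_e1 e0_e1_r0 r0_square mult_1_right mult.assoc)

lemma r0_r1_e0_r1_r0_e0: "r0 * r1 * e0 * r1 * r0 * e0 = d ^ 2 * r0 * r1 * e0"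
  by (metis r0_e0 e0_r1_e0 d_power_central mult.assoc)

lemma r0_r1_e0_r1_r0_e1: "r0 * r1 * e0 * r1 * r0 * e1 = d * r0 * r1 * e0 * r1 * r0"
proof -
  have "r0 * r1 * e0 * r1 * r0 * e1 = e1 * e0 * e1 * e1"
    by (simp add: e1_e0 e0_e1 mult.assoc)
  also have "\<dots> = d * (e1 * e0 * e1)"
    by (simp add: e1_square d_central mult.assoc)
  also have "\<dots> = d * r0 * r1 * e0 * r1 * r0"
    by (simp add: e1_e0 e0_e1 mult.assoc)
  finally show ?thesis .
qed

lemma r0_e1_r0_e0: "r0 * e1 * r0 * e0 = r1 * e0"
  by (metis r0_e0 r0_e1_e0 mult.assoc)

lemma r0_e1_r0_e1: "r0 * e1 * r0 * e1 = r0 * e1 * r0 * r1 * r0 * r1 * r0"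
  by (metis e1_r0_e1 mult.assoc)

lemma r1_r0_e1_r0_r1_e0: "r1 * r0 * e1 * r0 * r1 * e0 = d * e0"
proof -
  have "r1 * r0 * e1 * r0 * r1 * e0 = r1 * r0 * e1 * e1 * e0"
    by (metis r0_e1_e0 r0_square mult_1_left mult.assoc)
  also have "\<dots> = d * (r1 * r0 * e1 * e0)"
    by (metis e1_square d_central mult.assoc)
  also have "\<dots> = d * e0"
    by (simp add: e1_e0 mult.assoc r0_square_left r1_square_left)
  finally show ?thesis .
qed

lemma r1_r0_e1_r0_r1_e1: "r1 * r0 * e1 * r0 * r1 * e1 = r0 * r1 * r0 * e1"
  by (metis r1_e1 r1_r0_e1_r0_e1 mult.assoc)

lemmas e_root_gen_e_products =
  e0_square e0_e1 e1_e0 e1_square r1_e0_r1_e0 r1_e0_r1_e1 r0_r1_e0_r1_r0_e0 r0_r1_e0_r1_r0_e1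
  r0_e1_r0_e0 r0_e1_r0_e1 r1_r0_e1_r0_r1_e0 r1_r0_e1_r0_r1_e1

end

definition e_root_gen_e_table :: "(((int \<times> int) \<times> nat) \<times> nat list \<times> nat \<times> nat list \<times> int) list" where
  "e_root_gen_e_table =
     [(((1,0), 0), ([], 0, [], 3)),
      (((1,0), 1), ([], 0, [1,0], 0)),
      (((0,1), 0), ([0,1], 0, [], 0)),
      (((0,1), 1), ([], 1, [], 1)),
      (((1,1), 0), ([1], 0, [], 2)),
      (((1,1), 1), ([1], 0, [1,0], 0)),
      (((2,1), 0), ([0,1], 0, [], 2)),
      (((2,1), 1), ([0,1], 0, [1,0], 1)),
      (((3,1), 0), ([1], 0, [], 0)),
      (((3,1), 1), ([0], 1, [0,1,0,1,0], 0)),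
      (((3,2), 0), ([], 0, [], 1)),
      (((3,2), 1), ([0,1,0], 1, [], 0))]"

lemma e_root_gen_e_table_defined:
  assumes "\<beta> \<in> pos_roots" and "i < 2"
  shows "\<exists>a1 j a2 t. map_of e_root_gen_e_table (\<beta>, i) = Some (a1, j, a2, t) \<and>
           is_word a1 \<and> is_word a2 \<and> j < 2"
  using assms
  by (auto simp: pos_roots_def e_root_gen_e_table_def is_word_def less_2_cases_iff)

context brauer_G2
begin

lemma e_root_gen_e_table_entries:
  "list_all (\<lambda>((\<beta>, i), (a1, j, a2, t)). e_root r0 r1 e0 e1 \<beta> * gen_e e0 e1 i =
       zpow d di t * wprod r0 r1 a1 * gen_e e0 e1 j * wprod r0 r1 a2) e_root_gen_e_table"
  by (simp add: e_root_gen_e_table_def e_root_def gen_e_def zpow_def wprod_def gen_r_def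
      mult.assoc e_root_gen_e_products[unfolded mult.assoc])

lemma e_root_gen_e_table_correct:
  assumes "map_of e_root_gen_e_table (\<beta>, i) = Some (a1, j, a2, t)"
  shows "e_root r0 r1 e0 e1 \<beta> * gen_e e0 e1 i =
           zpow d di t * wprod r0 r1 a1 * gen_e e0 e1 j * wprod r0 r1 a2"
  using map_of_SomeD[OF assms] e_root_gen_e_table_entries
  unfolding list_all_iff by fastforce

end

theorem lemma9p6:
  fixes \<beta> :: "int \<times> int" and i :: nat
  assumes "\<beta> \<in> pos_roots" and "i < 2"
  shows "\<exists>a1 a2 j (t::int). is_word a1 \<and> is_word a2 \<and> j < 2 \<and>
           (\<forall>(d::'a::ring_1) di r0 r1 e0 e1. brg2_rel d di r0 r1 e0 e1 \<longrightarrow>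
              ebeta r0 r1 e0 e1 \<beta> * gen_e e0 e1 i =
              zpow d di t * wprod r0 r1 a1 * gen_e e0 e1 j * wprod r0 r1 a2)"
proof -
  obtain a1 j a2 t where table: "map_of e_root_gen_e_table (\<beta>, i) = Some (a1, j, a2, t)"
    and words: "is_word a1" "is_word a2" "j < 2"
    using e_root_gen_e_table_defined[OF assms] by blast
  have "ebeta r0 r1 e0 e1 \<beta> * gen_e e0 e1 i =
          zpow d di t * wprod r0 r1 a1 * gen_e e0 e1 j * wprod r0 r1 a2"
    if "brg2_rel d di r0 r1 e0 e1" for d di r0 r1 e0 e1 :: 'a
  proof -
    interpret brauer_G2 d di r0 r1 e0 e1
      using that by (rule brauer_G2.intro)
    show ?thesis
      using ebeta_eq_e_root[OF assms(1)] e_root_gen_e_table_correct[OF table] by simp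
  qed
  then show ?thesis
    using words by blast
qed

end
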